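(* Let $G$ be an almost simple primitive permutation group on $\Omega$ with a normal subgroup $G_0$, and let $\omega\in\Omega$. If $K$ is a fixer of $G$ with $|K|\geqslant|G_\omega|$, then $K_0:=K\cap G_0$ is a fixer of $G_0$ (acting on $\Omega$) with $|K_0|\geqslant|(G_0)_\omega|$.
   Context: A subgroup $K$ of a permutation group $G\leqslant\mathrm{Sym}(\Omega)$ is a fixer if every element of $K$ fixes at least one point of $\Omega$. *)

theory Defs
  imports "HOL-Algebra.Algebra"
begin

definition perm_grp :: "'a set \<Rightarrow> ('a \<Rightarrow> 'a) set \<Rightarrow> ('a \<Rightarrow> 'a) monoid" where
  "perm_grp \<Omega> G = (BijGroup \<Omega>)\<lparr>carrier := G\<rparr>"

definition perm_group :: "'a set \<Rightarrow> ('a \<Rightarrow> 'a) set \<Rightarrow> bool" where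
  "perm_group \<Omega> G \<longleftrightarrow> subgroup G (BijGroup \<Omega>)"

definition stabiliser :: "('a \<Rightarrow> 'a) set \<Rightarrow> 'a \<Rightarrow> ('a \<Rightarrow> 'a) set" where
  "stabiliser G \<omega> = {g \<in> G. g \<omega> = \<omega>}"

definition transitive_on :: "'a set \<Rightarrow> ('a \<Rightarrow> 'a) set \<Rightarrow> bool" where
  "transitive_on \<Omega> G \<longleftrightarrow> (\<forall>x\<in>\<Omega>. \<forall>y\<in>\<Omega>. \<exists>g\<in>G. g x = y)"

definition is_block :: "'a set \<Rightarrow> ('a \<Rightarrow> 'a) set \<Rightarrow> 'a set \<Rightarrow> bool" where
  "is_block \<Omega> G B \<longleftrightarrow> B \<subseteq> \<Omega> \<and> B \<noteq> {} \<and>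
     (\<forall>g\<in>G. g ` B = B \<or> g ` B \<inter> B = {})"

definition primitive :: "'a set \<Rightarrow> ('a \<Rightarrow> 'a) set \<Rightarrow> bool" where
  "primitive \<Omega> G \<longleftrightarrow> perm_group \<Omega> G \<and> transitive_on \<Omega> G \<and>
     (\<forall>B. is_block \<Omega> G B \<longrightarrow> card B = 1 \<or> B = \<Omega>)"

text \<open>Almost simple: T \<le> G \<le> Aut(T) for a nonabelian simple group T, i.e. G has a
  nonabelian simple normal subgroup T with trivial centraliser in G.\<close>
definition almost_simple :: "('a \<Rightarrow> 'a) monoid \<Rightarrow> bool" where
  "almost_simple H \<longleftrightarrow> group H \<and> (\<exists>T. T \<lhd> H \<and> simple_group (H\<lparr>carrier := T\<rparr>) \<and>
     \<not> comm_group (H\<lparr>carrier := T\<rparr>) \<and>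
     {g \<in> carrier H. \<forall>t\<in>T. g \<otimes>\<^bsub>H\<^esub> t = t \<otimes>\<^bsub>H\<^esub> g} = {\<one>\<^bsub>H\<^esub>})"

definition fixer :: "'a set \<Rightarrow> ('a \<Rightarrow> 'a) set \<Rightarrow> ('a \<Rightarrow> 'a) set \<Rightarrow> bool" where
  "fixer \<Omega> G K \<longleftrightarrow> subgroup K (perm_grp \<Omega> G) \<and> (\<forall>k\<in>K. \<exists>x\<in>\<Omega>. k x = x)"

end

theory Submission
  imports Defs "HOL-Algebra.Group_Action" "HOL-Algebra.SndIsomorphismGrp"
begin

text \<open>The orbits of a normal subgroup N of G are permuted by G, so they form a system of
  blocks. By primitivity either N is transitive or every N-orbit is a point, i.e. N is trivial;
  in the trivial case the bound is immediate. If N is transitive, orbit-stabiliser gives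
  |G| = |\<Omega>| |G_\<omega>| and |N| = |\<Omega>| |N_\<omega>|, and the product formula |NK| |N \<inter> K| = |N| |K|
  with NK \<subseteq> G yields |G_\<omega>| |N| \<le> |K| |N| \<le> |G| |K \<inter> N|, which is |N_\<omega>| \<le> |K \<inter> N|
  after dividing by |G|.\<close>

lemma (in group) card_normal_set_mult:
  assumes "N \<lhd> G" and "subgroup K G"
  shows "card (N <#> K) * card (N \<inter> K) = card N * card K"
proof -
  interpret second_isomorphism_grp N G K
    using assms by (simp add: second_isomorphism_grp_def second_isomorphism_grp_axioms_def)
  have quotients: "card (rcosets\<^bsub>G\<lparr>carrier := K\<rparr>\<^esub> (N \<inter> K))
                 = card (rcosets\<^bsub>G\<lparr>carrier := N <#> K\<rparr>\<^esub> N)"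
    using iso_same_order[OF normal_intersection_quotient_isom] by (simp add: order_def FactGroup_def)
  have "card (rcosets\<^bsub>G\<lparr>carrier := K\<rparr>\<^esub> (N \<inter> K)) * card (N \<inter> K) = card K"
    using group.lagrange[OF subgroup_imp_group[OF subgrpS]]
      subgroup_incl[OF subgroups_Inter_pair[OF subgroup_axioms subgrpS] subgrpS]
    by (simp add: order_def)
  moreover have "card (rcosets\<^bsub>G\<lparr>carrier := N <#> K\<rparr>\<^esub> N) * card N = card (N <#> K)"
    using group.lagrange[OF subgroup_imp_group[OF normal_set_mult_subgroup]]
      subgroup_incl[OF subgroup_axioms normal_set_mult_subgroup H_contained_in_set_mult]
    by (simp add: order_def)
  ultimately show ?thesis
    using quotients by (metis mult.assoc mult.commute)
qed

lemma (in group) card_mult_card_normal_le: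
  assumes "finite (carrier G)" and "N \<lhd> G" and "subgroup K G"
  shows "card K * card N \<le> order G * card (K \<inter> N)"
proof -
  have "card (N <#> K) \<le> order G"
    unfolding order_def
    using assms second_isomorphism_grp.normal_set_mult_subgroup subgroup.subset card_mono
    by (metis second_isomorphism_grp_axioms_def second_isomorphism_grp_def)
  then show ?thesis
    using card_normal_set_mult[OF assms(2,3)]
    by (metis Int_commute mult.commute mult_le_mono1)
qed

lemma perm_grp_carrier [simp]: "carrier (perm_grp \<Omega> G) = G"
  by (simp add: perm_grp_def)

lemma perm_grp_restrict [simp]: "(perm_grp \<Omega> G)\<lparr>carrier := H\<rparr> = perm_grp \<Omega> H"
  by (simp add: perm_grp_def)

lemma orbit_perm_grp: "orbit (perm_grp \<Omega> G) id x = (\<lambda>g. g x) ` G"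
  by (auto simp: orbit_def)

lemma stabilizer_perm_grp: "stabilizer (perm_grp \<Omega> G) id x = stabiliser G x"
  by (simp add: stabilizer_def stabiliser_def)

lemma perm_group_imp_group: "perm_group \<Omega> G \<Longrightarrow> group (perm_grp \<Omega> G)"
  unfolding perm_group_def perm_grp_def by (rule group.subgroup_imp_group[OF group_BijGroup])

lemma perm_group_action:
  assumes "perm_group \<Omega> G"
  shows "group_action (perm_grp \<Omega> G) \<Omega> id"
proof -
  have "G \<subseteq> carrier (BijGroup \<Omega>)"
    using assms subgroup.subset unfolding perm_group_def by blast
  then have "id \<in> hom (perm_grp \<Omega> G) (BijGroup \<Omega>)"
    unfolding hom_def perm_grp_def by auto
  then show ?thesis
    using perm_group_imp_group[OF assms] group_BijGroup
    by (simp add: group_action_def group_hom_def group_hom_axioms_def)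
qed

lemma perm_group_subgroup:
  assumes "perm_group \<Omega> G" and "subgroup H (perm_grp \<Omega> G)"
  shows "perm_group \<Omega> H"
  using assms unfolding perm_group_def perm_grp_def
  by (rule group.incl_subgroup[OF group_BijGroup])

lemma finite_perm_group:
  assumes "perm_group \<Omega> G" and "finite \<Omega>"
  shows "finite G"
proof (rule finite_subset)
  have "G \<subseteq> Bij \<Omega>"
    using assms(1) subgroup.subset unfolding perm_group_def BijGroup_def by force
  also have "Bij \<Omega> \<subseteq> \<Omega> \<rightarrow>\<^sub>E \<Omega>"
    by (auto simp: Bij_def bij_betw_def PiE_def)
  finally show "G \<subseteq> \<Omega> \<rightarrow>\<^sub>E \<Omega>" .
  show "finite (\<Omega> \<rightarrow>\<^sub>E \<Omega>)"
    using assms(2) by (simp add: finite_PiE)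
qed

lemma perm_grp_eq_one:
  assumes "perm_group \<Omega> G" and "g \<in> G" and "\<forall>x\<in>\<Omega>. g x = x"
  shows "g = \<one>\<^bsub>perm_grp \<Omega> G\<^esub>"
proof -
  interpret group_action "perm_grp \<Omega> G" \<Omega> id
    using assms(1) by (rule perm_group_action)
  have "g \<in> extensional \<Omega>"
    using bij_prop0[of g] assms(2) by (simp add: Bij_def)
  then have "g = (\<lambda>x\<in>\<Omega>. x)"
    using assms(3) by (auto simp: extensional_def)
  then show ?thesis
    using id_eq_one by simp
qed

lemma card_transitive_perm_group:
  assumes "perm_group \<Omega> G" and "\<omega> \<in> \<Omega>" and "orbit (perm_grp \<Omega> G) id \<omega> = \<Omega>"
  shows "card \<Omega> * card (stabiliser G \<omega>) = card G"
  using group_action.orbit_stabilizer_theorem[OF perm_group_action[OF assms(1)] assms(2)] assms(3)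
  by (simp add: stabilizer_perm_grp order_def)

lemma transitive_on_imp_orbit_eq:
  assumes "perm_group \<Omega> G" and "transitive_on \<Omega> G" and "\<omega> \<in> \<Omega>"
  shows "orbit (perm_grp \<Omega> G) id \<omega> = \<Omega>"
proof -
  interpret group_action "perm_grp \<Omega> G" \<Omega> id
    using assms(1) by (rule perm_group_action)
  show ?thesis
  proof
    show "orbit (perm_grp \<Omega> G) id \<omega> \<subseteq> \<Omega>"
      using element_image assms(3) by (auto simp: orbit_perm_grp)
    show "\<Omega> \<subseteq> orbit (perm_grp \<Omega> G) id \<omega>"
    proof
      fix y
      assume "y \<in> \<Omega>"
      then obtain g where "g \<in> G" and "g \<omega> = y"
        using assms(2,3) unfolding transitive_on_def by blast
      then show "y \<in> orbit (perm_grp \<Omega> G) id \<omega>"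
        unfolding orbit_perm_grp by blast
    qed
  qed
qed

lemma normal_orbit_image:
  assumes "perm_group \<Omega> G" and "N \<lhd> perm_grp \<Omega> G" and "g \<in> G" and "x \<in> \<Omega>"
  shows "g ` orbit (perm_grp \<Omega> N) id x = orbit (perm_grp \<Omega> N) id (g x)"
proof -
  interpret group_action "perm_grp \<Omega> G" \<Omega> id
    using assms(1) by (rule perm_group_action)
  have NG: "N \<subseteq> G"
    using assms(2) normal_imp_subgroup subgroup.subset by fastforce
  have "g ` orbit (perm_grp \<Omega> N) id x = (\<lambda>h. g (h x)) ` N"
    by (simp add: orbit_perm_grp image_image)
  also have "\<dots> = (\<lambda>h. (g \<otimes>\<^bsub>perm_grp \<Omega> G\<^esub> h) x) ` N"
    using composition_rule[of x g] assms(3,4) NG by (intro image_cong) auto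
  also have "\<dots> = (\<lambda>k. k x) ` (g <#\<^bsub>perm_grp \<Omega> G\<^esub> N)"
    by (simp add: l_coset_def UNION_singleton_eq_range image_image)
  also have "g <#\<^bsub>perm_grp \<Omega> G\<^esub> N = N #>\<^bsub>perm_grp \<Omega> G\<^esub> g"
    using normal.coset_eq[OF assms(2)] assms(3) by simp
  also have "(\<lambda>k. k x) ` (N #>\<^bsub>perm_grp \<Omega> G\<^esub> g) = (\<lambda>h. (h \<otimes>\<^bsub>perm_grp \<Omega> G\<^esub> g) x) ` N"
    by (simp add: r_coset_def UNION_singleton_eq_range image_image)
  also have "\<dots> = (\<lambda>h. h (g x)) ` N"
    using composition_rule[of x _ g] assms(3,4) NG by (intro image_cong) auto
  also have "\<dots> = orbit (perm_grp \<Omega> N) id (g x)"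
    by (simp add: orbit_perm_grp)
  finally show ?thesis .
qed

lemma normal_orbit_is_block:
  assumes "perm_group \<Omega> G" and "N \<lhd> perm_grp \<Omega> G" and "x \<in> \<Omega>"
  shows "is_block \<Omega> G (orbit (perm_grp \<Omega> N) id x)"
proof -
  interpret G: group_action "perm_grp \<Omega> G" \<Omega> id
    using assms(1) by (rule perm_group_action)
  interpret N: group_action "perm_grp \<Omega> N" \<Omega> id
    using perm_group_action perm_group_subgroup assms(1,2) normal_imp_subgroup by blast
  show ?thesis
    unfolding is_block_def
  proof (intro conjI ballI)
    show "orbit (perm_grp \<Omega> N) id x \<subseteq> \<Omega>"
      using N.element_image assms(3) by (auto simp: orbit_perm_grp)
    show "orbit (perm_grp \<Omega> N) id x \<noteq> {}"
      using N.orbit_refl[OF assms(3)] by blast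
  next
    fix g
    assume g: "g \<in> G"
    then have "g x \<in> \<Omega>"
      using G.element_image assms(3) by simp
    then have "orbit (perm_grp \<Omega> N) id (g x) = orbit (perm_grp \<Omega> N) id x \<or>
               orbit (perm_grp \<Omega> N) id (g x) \<inter> orbit (perm_grp \<Omega> N) id x = {}"
      using N.disjoint_union assms(3) by (auto simp: orbits_def)
    then show "g ` orbit (perm_grp \<Omega> N) id x = orbit (perm_grp \<Omega> N) id x \<or>
               g ` orbit (perm_grp \<Omega> N) id x \<inter> orbit (perm_grp \<Omega> N) id x = {}"
      using normal_orbit_image[OF assms(1,2) g assms(3)] by simp
  qed
qed

lemma primitive_normal_subgroup_trivial_or_transitive:
  assumes "primitive \<Omega> G" and "N \<lhd> perm_grp \<Omega> G" and "\<omega> \<in> \<Omega>"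
  shows "N = {\<one>\<^bsub>perm_grp \<Omega> G\<^esub>} \<or> orbit (perm_grp \<Omega> N) id \<omega> = \<Omega>"
proof (rule disjCI)
  assume not_transitive: "orbit (perm_grp \<Omega> N) id \<omega> \<noteq> \<Omega>"
  have G: "perm_group \<Omega> G" and G_transitive: "transitive_on \<Omega> G"
    using assms(1) by (simp_all add: primitive_def)
  have N: "subgroup N (perm_grp \<Omega> G)"
    using assms(2) by (rule normal_imp_subgroup)
  interpret N: group_action "perm_grp \<Omega> N" \<Omega> id
    using perm_group_action perm_group_subgroup G N by blast
  have "card (orbit (perm_grp \<Omega> N) id \<omega>) = 1"
    using normal_orbit_is_block[OF G assms(2,3)] not_transitive assms(1)
    unfolding primitive_def by blast
  then have orbit_\<omega>: "orbit (perm_grp \<Omega> N) id \<omega> = {\<omega>}"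
    using N.orbit_refl[OF assms(3)] by (metis card_1_singletonE singletonD)
  have fixes_all: "h y = y" if "h \<in> N" and "y \<in> \<Omega>" for h y
  proof -
    obtain g where "g \<in> G" and "g \<omega> = y"
      using G_transitive assms(3) \<open>y \<in> \<Omega>\<close> unfolding transitive_on_def by blast
    then have "orbit (perm_grp \<Omega> N) id y = {y}"
      using normal_orbit_image[OF G assms(2) _ assms(3)] orbit_\<omega> by force
    moreover have "h y \<in> orbit (perm_grp \<Omega> N) id y"
      using \<open>h \<in> N\<close> by (simp add: orbit_perm_grp)
    ultimately show ?thesis
      by simp
  qed
  show "N = {\<one>\<^bsub>perm_grp \<Omega> G\<^esub>}"
    using perm_grp_eq_one[OF G] fixes_all subgroup.subset[OF N] subgroup.one_closed[OF N]
    by auto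
qed

lemma fixer_Int_subgroup:
  assumes "perm_group \<Omega> G" and "fixer \<Omega> G K" and "subgroup H (perm_grp \<Omega> G)"
  shows "fixer \<Omega> H (K \<inter> H)"
proof -
  interpret group "perm_grp \<Omega> G"
    using assms(1) by (rule perm_group_imp_group)
  have "subgroup K (perm_grp \<Omega> G)"
    using assms(2) by (simp add: fixer_def)
  then have "subgroup (K \<inter> H) (perm_grp \<Omega> H)"
    using subgroup_incl[OF subgroups_Inter_pair assms(3)] assms(3) by fastforce
  then show ?thesis
    using assms(2) by (auto simp: fixer_def)
qed

lemma card_stabiliser_le_card_Int_normal:
  assumes "perm_group \<Omega> G" and "finite \<Omega>" and "\<omega> \<in> \<Omega>" and "transitive_on \<Omega> G"
    and "N \<lhd> perm_grp \<Omega> G" and "orbit (perm_grp \<Omega> N) id \<omega> = \<Omega>"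
    and "subgroup K (perm_grp \<Omega> G)" and "card (stabiliser G \<omega>) \<le> card K"
  shows "card (stabiliser N \<omega>) \<le> card (K \<inter> N)"
proof -
  interpret group "perm_grp \<Omega> G"
    using assms(1) by (rule perm_group_imp_group)
  have finite_G: "finite G"
    using assms(1,2) by (rule finite_perm_group)
  have card_G: "card \<Omega> * card (stabiliser G \<omega>) = card G"
    using card_transitive_perm_group[OF assms(1,3)] transitive_on_imp_orbit_eq[OF assms(1,4,3)] .
  have card_N: "card \<Omega> * card (stabiliser N \<omega>) = card N"
    using card_transitive_perm_group[OF _ assms(3,6)] perm_group_subgroup[OF assms(1)]
      normal_imp_subgroup[OF assms(5)] by blast
  have "card G * card (stabiliser N \<omega>) = card (stabiliser G \<omega>) * card N"
    by (simp flip: card_G card_N)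
  also have "\<dots> \<le> card K * card N"
    using assms(8) by simp
  also have "\<dots> \<le> card G * card (K \<inter> N)"
    using card_mult_card_normal_le[OF _ assms(5,7)] finite_G by (simp add: order_def)
  finally have "card G * card (stabiliser N \<omega>) \<le> card G * card (K \<inter> N)" .
  moreover have "card G > 0"
    using finite_G one_closed card_gt_0_iff by force
  ultimately show ?thesis
    by simp
qed

theorem lemma2p5:
  fixes \<Omega> :: "'a set" and G G0 K :: "('a \<Rightarrow> 'a) set" and \<omega> :: 'a
  assumes "finite \<Omega>"
    and "perm_group \<Omega> G"
    and "primitive \<Omega> G"
    and "almost_simple (perm_grp \<Omega> G)"
    and "G0 \<lhd> perm_grp \<Omega> G"
    and "\<omega> \<in> \<Omega>"
    and "fixer \<Omega> G K"
    and "card K \<ge> card (stabiliser G \<omega>)"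
  shows "fixer \<Omega> G0 (K \<inter> G0) \<and> card (K \<inter> G0) \<ge> card (stabiliser G0 \<omega>)"
proof
  have K: "subgroup K (perm_grp \<Omega> G)"
    using assms(7) by (simp add: fixer_def)
  show "fixer \<Omega> G0 (K \<inter> G0)"
    using fixer_Int_subgroup[OF assms(2,7)] normal_imp_subgroup[OF assms(5)] .
  from primitive_normal_subgroup_trivial_or_transitive[OF assms(3,5,6)]
  show "card (stabiliser G0 \<omega>) \<le> card (K \<inter> G0)"
  proof
    assume G0_trivial: "G0 = {\<one>\<^bsub>perm_grp \<Omega> G\<^esub>}"
    then have "stabiliser G0 \<omega> \<subseteq> K \<inter> G0"
      using subgroup.one_closed[OF K] by (auto simp: stabiliser_def)
    then show ?thesis
      using G0_trivial by (simp add: card_mono)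
  next
    assume "orbit (perm_grp \<Omega> G0) id \<omega> = \<Omega>"
    then show ?thesis
      using card_stabiliser_le_card_Int_normal[OF assms(2,1,6) _ assms(5) _ K assms(8)] assms(3)
      by (simp add: primitive_def)
  qed
qed

end
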